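(* In the setting below, the vector $1\otimes e^{\lambda_6}\in V^{\Lambda_6}$ is a highest weight vector of type $Vir(\tfrac45,\tfrac1{15})\otimes W^{\Omega_4}$, i.e. it satisfies (HW1)–(HW5) with $h=1/15$ and $\omega_j=\omega_4$.
   Context: Setting. $Q$ is the $E_6$ root lattice with simple roots $\alpha_1,\dots,\alpha_6$ (Dynkin chain $\alpha_1-\alpha_3-\alpha_4-\alpha_5-\alpha_6$, $\alpha_2$ attached to $\alpha_4$), form from the Cartan matrix, fundamental weights $\lambda_i$, $P=\bigoplus\mathbb Z\lambda_i$, $\mathfrak h=\mathbb C\otimes P$. $\varepsilon$ bimultiplicative on $P$ with $[\varepsilon(\lambda_i,\lambda_j)]$ rows $(1,1,1,1,1,1)$, $(-1,1,1,1,1,-1)$, $(-1,1,1,1,1,1)$, $(1,-1,1,1,1,1)$, $(1,1,1,1,1,-1)$, $(1,1,1,1,1,1)$. $V_P=S(\hat{\mathfrak h}^-)\otimes\mathbb C[P]$ with Heisenberg operators $h(n)$ ($[h(m),h'(n)]=m\langle h,h'\rangle\delta_{m+n,0}$, $h(n)1=0$ for $n>0$, $h(0)(u\otimes e^\beta)=\langle h,\beta\rangle u\otimes e^\beta$). For $\alpha\in Q$, acting on $V_P$: $Y(1\otimes e^\alpha,z)=\exp(\sum_{k\ge1}\frac{\alpha(-k)}kz^k)\exp(-\sum_{k\ge1}\frac{\alpha(k)}kz^{-k})e_\alpha z^{\alpha(0)}=\sum_n\{1\otimes e^\alpha\}_nz^{-n-1}$, $e_\alpha(u\otimes e^\beta)=\varepsilon(\alpha,\beta)u\otimes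 e^{\alpha+\beta}$, $z^{\alpha(0)}(u\otimes e^\beta)=z^{\langle\alpha,\beta\rangle}u\otimes e^\beta$; $Y(h_1(-1)\cdots h_k(-1)\otimes e^\alpha,z)=\,:h_1(z)\cdots h_k(z)Y(1\otimes e^\alpha,z):$, $h(z)=\sum_nh(n)z^{-n-1}$. $V^{\Lambda_6}$ is spanned by $S(\hat{\mathfrak h}^-)\otimes e^\nu$, $\nu\in\lambda_6+Q$. $\tau$: $\alpha_1\leftrightarrow\alpha_6$, $\alpha_3\leftrightarrow\alpha_5$; $\mathrm{Proj}(\nu)=(\nu+\tau\nu)/2$. $\theta=\alpha_1+2\alpha_2+2\alpha_3+3\alpha_4+2\alpha_5+\alpha_6$. Raising operators of $\tilde{\mathfrak a}$ ($F_4^{(1)}$): $\{\beta_1\}_0=\{1\otimes e^{\alpha_2}\}_0$, $\{\beta_2\}_0=\{1\otimes e^{\alpha_4}\}_0$, $\{\beta_3\}_0=\{1\otimes e^{\alpha_3}\}_0+\{1\otimes e^{\alpha_5}\}_0$, $\{\beta_4\}_0=\{1\otimes e^{\alpha_1}\}_0+\{1\otimes e^{\alpha_6}\}_0$, $\{1\otimes e^{-\theta}\}_1$. Coset conformal vector $\omega=\frac1{10}[(-\lambda_1+\lambda_6)(-1)^2+(\lambda_3-\lambda_5)(-1)^2+(\lambda_1-\lambda_3+\lambda_5-\lambda_6)(-1)^2]\otimes e^0+\frac15(-1\otimes e^{\pm\gamma_1}-1\otimes e^{\pm\gamma_2}+1\otimes e^{\pm\gamma_3})$, $\gamma_1=\alpha_1-\alpha_6$,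 $\gamma_2=\alpha_3-\alpha_5$, $\gamma_3=\gamma_1+\gamma_2$, $1\otimes e^{\pm\gamma}:=1\otimes e^\gamma+1\otimes e^{-\gamma}$; $L(n)=\{\omega\}_{n+1}$ (Virasoro, $c=4/5$, commuting with $\tilde{\mathfrak a}$). $\omega_4=\frac{\lambda_1+\lambda_6}2$, $W^{\Omega_4}$ the level one irreducible $F_4^{(1)}$-module whose highest weight has finite part $\omega_4$. A nonzero $v$ is a highest weight vector of type $Vir(\frac45,h)\otimes W^{\Omega_j}$ if (HW1) $\{1\otimes e^{-\theta}\}_1v=0$; (HW2) $\{\beta_i\}_0v=0$, $i=1,\dots,4$; (HW3) $L(1)v=L(2)v=0$; (HW4) $L(0)v=hv$; (HW5) $v\in\bigoplus_kS(\hat{\mathfrak h}^-)\otimes e^{\nu_k}$ with $\mathrm{Proj}(\nu_k)=\omega_j$. *)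

theory Defs
  imports Complex_Main "HOL-Library.Multiset" "HOL-Library.Groups_Big_Fun"
    "HOL-Library.Function_Algebras"
begin

datatype idx = I1 | I2 | I3 | I4 | I5 | I6

lemma UNIV_idx: "(UNIV :: idx set) = {I1, I2, I3, I4, I5, I6}"
  using idx.exhaust by auto

instance idx :: finite
  by standard (simp add: UNIV_idx)

definition adj :: "idx \<Rightarrow> idx \<Rightarrow> bool" where
  "adj i j \<longleftrightarrow> (i, j) \<in> set [(I1, I3), (I3, I4), (I4, I5), (I5, I6), (I2, I4),
                                (I3, I1), (I4, I3), (I5, I4), (I6, I5), (I4, I2)]"

definition cartan :: "idx \<Rightarrow> idx \<Rightarrow> int" where
  "cartan i j = (if i = j then 2 else if adj i j then -1 else 0)"

text \<open>Gram matrix of the fundamental weights, ginv i j = (lambda_i, lambda_j);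
  this is the inverse of the Cartan matrix (checked by lemma cartan_ginv).\<close>
definition ginv_row :: "idx \<Rightarrow> rat list" where
  "ginv_row i = (case i of
      I1 \<Rightarrow> [4/3, 1, 5/3, 2, 4/3, 2/3]
    | I2 \<Rightarrow> [1, 2, 2, 3, 2, 1]
    | I3 \<Rightarrow> [5/3, 2, 10/3, 4, 8/3, 4/3]
    | I4 \<Rightarrow> [2, 3, 4, 6, 4, 2]
    | I5 \<Rightarrow> [4/3, 2, 8/3, 4, 10/3, 5/3]
    | I6 \<Rightarrow> [2/3, 1, 4/3, 2, 5/3, 4/3])"

definition pos :: "idx \<Rightarrow> nat" where
  "pos i = (case i of I1 \<Rightarrow> 0 | I2 \<Rightarrow> 1 | I3 \<Rightarrow> 2 | I4 \<Rightarrow> 3 | I5 \<Rightarrow> 4 | I6 \<Rightarrow> 5)"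

definition ginv :: "idx \<Rightarrow> idx \<Rightarrow> rat" where
  "ginv i j = ginv_row i ! pos j"

lemma cartan_ginv:
  "(\<Sum>k\<in>UNIV. of_int (cartan i k) * ginv k j) = (if i = j then 1 else 0)"
  by (cases i; cases j)
     (simp_all add: UNIV_idx cartan_def adj_def ginv_def ginv_row_def pos_def)

text \<open>Elements of P are written in the basis of fundamental weights (lambda-coordinates),
  elements of Q in the basis of simple roots (alpha-coordinates).
  Elements of h = C (x) P are complex vectors in lambda-coordinates.\<close>
type_synonym wt = "idx \<Rightarrow> int"
type_synonym hvec = "idx \<Rightarrow> complex"

definition lam :: "idx \<Rightarrow> wt" where "lam i = (\<lambda>j. if j = i then 1 else 0)"

text \<open>alpha-coordinates c of an element of Q to lambda-coordinates:
  alpha_i = sum_j cartan i j * lambda_j.\<close>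
definition qtop :: "(idx \<Rightarrow> int) \<Rightarrow> wt" where
  "qtop c = (\<lambda>j. \<Sum>i\<in>UNIV. c i * cartan i j)"

definition inQ :: "wt \<Rightarrow> bool" where "inQ \<beta> \<longleftrightarrow> (\<exists>c. \<beta> = qtop c)"

definition hv :: "wt \<Rightarrow> hvec" where "hv \<beta> = (\<lambda>i. of_int (\<beta> i))"

definition ipc :: "hvec \<Rightarrow> hvec \<Rightarrow> complex" where
  "ipc x y = (\<Sum>i\<in>UNIV. \<Sum>j\<in>UNIV. x i * y j * of_rat (ginv i j))"

text \<open>epsilon(lambda_i, lambda_j), extended bimultiplicatively.\<close>
definition epsrow :: "idx \<Rightarrow> int list" where
  "epsrow i = (case i of
      I1 \<Rightarrow> [1, 1, 1, 1, 1, 1]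
    | I2 \<Rightarrow> [-1, 1, 1, 1, 1, -1]
    | I3 \<Rightarrow> [-1, 1, 1, 1, 1, 1]
    | I4 \<Rightarrow> [1, -1, 1, 1, 1, 1]
    | I5 \<Rightarrow> [1, 1, 1, 1, 1, -1]
    | I6 \<Rightarrow> [1, 1, 1, 1, 1, 1])"

definition eps :: "wt \<Rightarrow> wt \<Rightarrow> complex" where
  "eps \<mu> \<nu> = (\<Prod>i\<in>UNIV. \<Prod>j\<in>UNIV.
      if epsrow i ! pos j = -1 \<and> odd (\<mu> i * \<nu> j) then -1 else 1)"

text \<open>A monomial of S(h^-) in the generators lambda_i(-k), k >= 1, is a multiset of
  pairs (i,k). A vector of V_P is a finitely supported coefficient function on
  basis elements u (x) e^beta.\<close>
type_synonym mono = "(idx \<times> nat) multiset"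
type_synonym fock = "mono \<times> wt \<Rightarrow> complex"

definition bv :: "mono \<Rightarrow> wt \<Rightarrow> fock" where
  "bv u \<beta> = (\<lambda>k. if k = (u, \<beta>) then 1 else 0)"

definition sc :: "complex \<Rightarrow> fock \<Rightarrow> fock" where
  "sc a v = (\<lambda>k. a * v k)"

definition lin :: "(mono \<times> wt \<Rightarrow> fock) \<Rightarrow> fock \<Rightarrow> fock" where
  "lin f v = Sum_any (\<lambda>k. sc (v k) (f k))"

definition heis_b :: "hvec \<Rightarrow> int \<Rightarrow> mono \<times> wt \<Rightarrow> fock" where
  "heis_b h n = (\<lambda>(u, \<beta>).
     if n < 0 then (\<Sum>i\<in>UNIV. sc (h i) (bv (u + {#(i, nat (- n))#}) \<beta>))
     else if n = 0 then sc (ipc h (hv \<beta>)) (bv u \<beta>)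
     else sum_mset (image_mset (\<lambda>(j, k). if int k = n
            then sc (of_int n * ipc h (hv (lam j))) (bv (u - {#(j, k)#}) \<beta>) else 0) u))"

definition heis :: "hvec \<Rightarrow> int \<Rightarrow> fock \<Rightarrow> fock" where
  "heis h n = lin (heis_b h n)"

text \<open>Coefficient of z^k in (sum_{j>=1} A_j z^j)^r, applied to v.\<close>
fun powcoef :: "(nat \<Rightarrow> fock \<Rightarrow> fock) \<Rightarrow> nat \<Rightarrow> nat \<Rightarrow> fock \<Rightarrow> fock" where
  "powcoef A 0 k v = (if k = 0 then v else 0)"
| "powcoef A (Suc r) k v = (\<Sum>j\<in>{1..k}. A j (powcoef A r (k - j) v))"

text \<open>Coefficient of z^k in exp(sum_{j>=1} A_j z^j) (terms with r > k vanish).\<close>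
definition expcoef :: "(nat \<Rightarrow> fock \<Rightarrow> fock) \<Rightarrow> nat \<Rightarrow> fock \<Rightarrow> fock" where
  "expcoef A k v = (\<Sum>r\<le>k. sc (1 / of_nat (fact r)) (powcoef A r k v))"

text \<open>E^-(alpha,z) = exp(sum alpha(-j)/j z^j), E^+(alpha,z) = exp(-sum alpha(j)/j z^(-j));
  the latter written in the variable z^(-1).\<close>
definition Em :: "(idx \<Rightarrow> int) \<Rightarrow> nat \<Rightarrow> fock \<Rightarrow> fock" where
  "Em c j v = sc (1 / of_nat j) (heis (hv (qtop c)) (- int j) v)"

definition Ep :: "(idx \<Rightarrow> int) \<Rightarrow> nat \<Rightarrow> fock \<Rightarrow> fock" where
  "Ep c j v = sc (- 1 / of_nat j) (heis (hv (qtop c)) (int j) v)"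

text \<open>Coefficient of z^m in Y(1 (x) e^alpha, z) v, alpha in Q with alpha-coordinates c.\<close>
definition yexp :: "(idx \<Rightarrow> int) \<Rightarrow> int \<Rightarrow> fock \<Rightarrow> fock" where
  "yexp c m = lin (\<lambda>(u, \<beta>).
     let p = (\<Sum>i\<in>UNIV. c i * \<beta> i);
         w = sc (eps (qtop c) \<beta>) (bv u (qtop c + \<beta>))
     in Sum_any (\<lambda>b::nat. let a = m + int b - p in
          if 0 \<le> a then expcoef (Em c) (nat a) (expcoef (Ep c) b w) else 0))"

text \<open>h^-(z) = sum_{n<0} h(n) z^(-n-1) and h^+(z) = sum_{n>=0} h(n) z^(-n-1): coefficients of z^a.\<close>
definition hminus :: "hvec \<Rightarrow> int \<Rightarrow> fock \<Rightarrow> fock" where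
  "hminus h a v = (if 0 \<le> a then heis h (- a - 1) v else 0)"

definition hplus :: "hvec \<Rightarrow> int \<Rightarrow> fock \<Rightarrow> fock" where
  "hplus h a v = (if a \<le> -1 then heis h (- a - 1) v else 0)"

text \<open>Coefficient of z^m in Y(h_1(-1)...h_k(-1) (x) e^alpha, z) v
  = :h_1(z)...h_k(z) Y(1 (x) e^alpha, z): v, normal ordering h^- to the left, h^+ to the right.\<close>
primrec yfield :: "hvec list \<Rightarrow> (idx \<Rightarrow> int) \<Rightarrow> int \<Rightarrow> fock \<Rightarrow> fock" where
  "yfield [] c m v = yexp c m v"
| "yfield (h # hs) c m v =
     Sum_any (\<lambda>a. hminus h a (yfield hs c (m - a) v))
     + Sum_any (\<lambda>a. yfield hs c (m - a) (hplus h a v))"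

definition ymode :: "hvec list \<Rightarrow> (idx \<Rightarrow> int) \<Rightarrow> int \<Rightarrow> fock \<Rightarrow> fock" where
  "ymode hs c n v = yfield hs c (- n - 1) v"

definition aco :: "idx \<Rightarrow> idx \<Rightarrow> int" where "aco i = (\<lambda>j. if j = i then 1 else 0)"

definition theta :: "idx \<Rightarrow> int" where
  "theta = aco I1 + 2 * aco I2 + 2 * aco I3 + 3 * aco I4 + 2 * aco I5 + aco I6"

definition gam1 :: "idx \<Rightarrow> int" where "gam1 = aco I1 - aco I6"
definition gam2 :: "idx \<Rightarrow> int" where "gam2 = aco I3 - aco I5"
definition gam3 :: "idx \<Rightarrow> int" where "gam3 = gam1 + gam2"

definition x1 :: hvec where "x1 = hv (- lam I1 + lam I6)"
definition x2 :: hvec where "x2 = hv (lam I3 - lam I5)"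
definition x3 :: hvec where "x3 = hv (lam I1 - lam I3 + lam I5 - lam I6)"

text \<open>L(n) = {omega}_{n+1}, by linearity of Y in the vector omega.\<close>
definition Lop :: "int \<Rightarrow> fock \<Rightarrow> fock" where
  "Lop n v =
     sc (1/10) (ymode [x1, x1] 0 (n + 1) v + ymode [x2, x2] 0 (n + 1) v
                + ymode [x3, x3] 0 (n + 1) v)
   + sc (1/5) (- (ymode [] gam1 (n + 1) v + ymode [] (- gam1) (n + 1) v)
               - (ymode [] gam2 (n + 1) v + ymode [] (- gam2) (n + 1) v)
               + (ymode [] gam3 (n + 1) v + ymode [] (- gam3) (n + 1) v))"

definition tau :: "idx \<Rightarrow> idx" where
  "tau i = (case i of I1 \<Rightarrow> I6 | I6 \<Rightarrow> I1 | I3 \<Rightarrow> I5 | I5 \<Rightarrow> I3 | I2 \<Rightarrow> I2 | I4 \<Rightarrow> I4)"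

definition Proj :: "wt \<Rightarrow> idx \<Rightarrow> rat" where
  "Proj \<nu> = (\<lambda>i. (of_int (\<nu> i) + of_int (\<nu> (tau i))) / 2)"

definition omega4 :: "idx \<Rightarrow> rat" where
  "omega4 = (\<lambda>i. if i = I1 \<or> i = I6 then 1/2 else 0)"

text \<open>Vectors of V^{Lambda_6}: supported on S(h^-) (x) e^nu with nu in lambda_6 + Q.\<close>
definition in_VL6 :: "fock \<Rightarrow> bool" where
  "in_VL6 v \<longleftrightarrow> finite {k. v k \<noteq> 0} \<and> (\<forall>u \<nu>. v (u, \<nu>) \<noteq> 0 \<longrightarrow> inQ (\<nu> - lam I6))"

text \<open>Highest weight vector of type Vir(4/5,h) (x) W^{Omega_j}, where wj is the finite part.\<close>
definition is_hw :: "fock \<Rightarrow> complex \<Rightarrow> (idx \<Rightarrow> rat) \<Rightarrow> bool" where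
  "is_hw v h wj \<longleftrightarrow> v \<noteq> 0
     \<and> ymode [] (- theta) 1 v = 0
     \<and> ymode [] (aco I2) 0 v = 0
     \<and> ymode [] (aco I4) 0 v = 0
     \<and> ymode [] (aco I3) 0 v + ymode [] (aco I5) 0 v = 0
     \<and> ymode [] (aco I1) 0 v + ymode [] (aco I6) 0 v = 0
     \<and> Lop 1 v = 0 \<and> Lop 2 v = 0
     \<and> Lop 0 v = sc h v
     \<and> (\<forall>u \<nu>. v (u, \<nu>) \<noteq> 0 \<longrightarrow> Proj \<nu> = wj)"

end

theory Submission
  imports Defs
begin

text \<open>All positive Heisenberg modes kill a vacuum vector \<open>1 \<otimes> e\<^sup>\<beta>\<close>, so
  \<open>Y(1 \<otimes> e\<^sup>\<alpha>, z) (1 \<otimes> e\<^sup>\<beta>)\<close> is a power series starting at \<open>z\<^bsup>\<langle>\<alpha>,\<beta>\<rangle>\<^esup>\<close>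
  and \<open>{1 \<otimes> e\<^sup>\<alpha>}\<^sub>n\<close> kills \<open>1 \<otimes> e\<^sup>\<beta>\<close> as soon as \<open>n \<ge> -\<langle>\<alpha>,\<beta>\<rangle>\<close>. For
  \<open>\<beta> = \<lambda>\<^sub>6\<close> all relevant pairings are \<open>0\<close> or \<open>\<plusminus>1\<close>, which kills every raising
  operator and every exponential part of \<open>L(0), L(1), L(2)\<close>. What remains is the
  Heisenberg part, which acts on the vacuum by the scalar
  \<open>\<delta>\<^sub>n\<^sub>0 \<Sum>\<^sub>i \<langle>x\<^sub>i,\<lambda>\<^sub>6\<rangle>\<^sup>2/10 = (4/9 + 1/9 + 1/9)/10 = 1/15\<close>.\<close>

definition root_pairing :: "(idx \<Rightarrow> int) \<Rightarrow> wt \<Rightarrow> int" where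
  "root_pairing c \<beta> = (\<Sum>i\<in>UNIV. c i * \<beta> i)"

lemma Sum_any_eq_single:
  assumes "\<And>a. a \<noteq> z \<Longrightarrow> g a = (0::'b::comm_monoid_add)"
  shows "Sum_any g = g z"
proof -
  have "Sum_any g = sum g {z}"
    by (rule Sum_any.expand_superset) (use assms in auto)
  then show ?thesis by simp
qed

lemma sc_0_left [simp]: "sc 0 v = 0"
  by (simp add: sc_def fun_eq_iff)

lemma sc_0_right [simp]: "sc a 0 = 0"
  by (simp add: sc_def fun_eq_iff)

lemma sc_1 [simp]: "sc 1 v = v"
  by (simp add: sc_def fun_eq_iff)

lemma sc_sc [simp]: "sc a (sc b v) = sc (a * b) v"
  by (simp add: sc_def fun_eq_iff)

lemma sc_add_left: "sc a v + sc b v = sc (a + b) v"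
  by (simp add: sc_def fun_eq_iff algebra_simps)

lemma lin_0 [simp]: "lin f 0 = 0"
  by (simp add: lin_def)

lemma lin_sc_bv: "lin f (sc a (bv u \<beta>)) = sc a (f (u, \<beta>))"
proof -
  have "lin f (sc a (bv u \<beta>)) = sc (sc a (bv u \<beta>) (u, \<beta>)) (f (u, \<beta>))"
    unfolding lin_def by (rule Sum_any_eq_single) (simp add: sc_def bv_def fun_eq_iff)
  then show ?thesis by (simp add: sc_def bv_def)
qed

lemma heis_0_right [simp]: "heis h n 0 = 0"
  by (simp add: heis_def)

lemma heis_pos_vacuum: "n > 0 \<Longrightarrow> heis h n (sc s (bv {#} \<beta>)) = 0"
  by (simp add: heis_def lin_sc_bv heis_b_def)

lemma heis_zero_vacuum: "heis h 0 (sc s (bv {#} \<beta>)) = sc (s * ipc h (hv \<beta>)) (bv {#} \<beta>)"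
  by (simp add: heis_def lin_sc_bv heis_b_def)

lemma hplus_vacuum:
  "hplus h a (sc s (bv {#} \<beta>)) = sc (if a = -1 then s * ipc h (hv \<beta>) else 0) (bv {#} \<beta>)"
  by (auto simp: hplus_def heis_zero_vacuum heis_pos_vacuum)

lemma hplus_0_right [simp]: "hplus h a 0 = 0"
  and hminus_0_right [simp]: "hminus h a 0 = 0"
  by (simp_all add: hplus_def hminus_def)

lemma Ep_vacuum: "Ep c j (sc s (bv {#} \<beta>)) = 0"
  by (cases "j = 0") (simp_all add: Ep_def heis_pos_vacuum)

lemma Ep_0_right: "Ep c j 0 = 0"
  and Em_0_right: "Em c j 0 = 0"
  by (simp_all add: Ep_def Em_def)

lemma qtop_zero [simp]: "qtop 0 = 0"
  by (simp add: qtop_def fun_eq_iff)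

lemma Em_zero_root: "Em 0 j v = 0"
proof -
  have "heis_b (hv 0) n = (\<lambda>_. 0)" if "n < 0" for n
    using that by (simp add: heis_b_def hv_def fun_eq_iff sc_def case_prod_beta)
  then show ?thesis
    by (cases "j = 0") (simp_all add: Em_def heis_def lin_def)
qed

lemma powcoef_0_right:
  assumes "\<And>j. A j 0 = 0"
  shows "powcoef A r k 0 = 0"
  by (induction r arbitrary: k) (simp_all add: assms)

lemma powcoef_Suc_annihilated:
  assumes "\<And>j. A j 0 = 0" and "\<And>j. A j w = 0"
  shows "powcoef A (Suc r) k w = 0"
proof (induction r arbitrary: k)
  case 0
  have "A j (if k \<le> j then w else 0) = 0" for j
    using assms by simp
  then show ?case by simp
next
  case (Suc r)
  have "powcoef A (Suc (Suc r)) k w = (\<Sum>j\<in>{1..k}. A j (powcoef A (Suc r) (k - j) w))"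
    by (rule powcoef.simps(2))
  also have "\<dots> = 0"
    by (simp only: Suc.IH assms sum.neutral_const)
  finally show ?case .
qed

lemma expcoef_0_right:
  assumes "\<And>j. A j 0 = 0"
  shows "expcoef A k 0 = 0"
  by (simp add: expcoef_def powcoef_0_right assms)

lemma expcoef_annihilated:
  assumes "\<And>j. A j 0 = 0" and "\<And>j. A j w = 0"
  shows "expcoef A k w = (if k = 0 then w else 0)"
proof -
  have "expcoef A k w = (\<Sum>r\<in>{0}. sc (1 / of_nat (fact r)) (powcoef A r k w))"
    unfolding expcoef_def
  proof (rule sum.mono_neutral_right)
    show "\<forall>r\<in>{..k} - {0}. sc (1 / of_nat (fact r)) (powcoef A r k w) = 0"
    proof
      fix r assume "r \<in> {..k} - {0}"
      then obtain r' where "r = Suc r'"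
        by (cases r) auto
      then show "sc (1 / of_nat (fact r)) (powcoef A r k w) = 0"
        by (simp only: powcoef_Suc_annihilated[OF assms] sc_0_right)
    qed
  qed auto
  then show ?thesis by simp
qed

lemma yexp_vacuum:
  "yexp c m (sc s (bv {#} \<beta>)) = sc s (if root_pairing c \<beta> \<le> m
      then expcoef (Em c) (nat (m - root_pairing c \<beta>))
           (sc (eps (qtop c) \<beta>) (bv {#} (qtop c + \<beta>))) else 0)"
proof -
  define p where "p = (\<Sum>i\<in>UNIV. c i * \<beta> i)"
  define w where "w = sc (eps (qtop c) \<beta>) (bv {#} (qtop c + \<beta>))"
  have Ep_exp: "expcoef (Ep c) b w = (if b = 0 then w else 0)" for b
    unfolding w_def by (rule expcoef_annihilated) (simp_all add: Ep_0_right Ep_vacuum)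
  \<comment> \<open>only the constant term of \<open>E\<^sup>+\<close> survives, so the sum over \<open>b\<close> collapses to \<open>b = 0\<close>\<close>
  have collapse: "Sum_any (\<lambda>b::nat. let a = m + int b - p in
          if 0 \<le> a then expcoef (Em c) (nat a) (expcoef (Ep c) b w) else 0)
      = (let a = m + int 0 - p in
          if 0 \<le> a then expcoef (Em c) (nat a) (expcoef (Ep c) 0 w) else 0)"
    by (rule Sum_any_eq_single) (simp add: Ep_exp Let_def expcoef_0_right Em_0_right)
  have "yexp c m (sc s (bv {#} \<beta>)) = sc s (Sum_any (\<lambda>b::nat. let a = m + int b - p in
          if 0 \<le> a then expcoef (Em c) (nat a) (expcoef (Ep c) b w) else 0))"
    unfolding yexp_def lin_sc_bv p_def w_def by (simp only: split Let_def)
  moreover have "expcoef (Ep c) 0 w = w"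
    by (simp add: Ep_exp)
  ultimately show ?thesis
    unfolding collapse by (simp add: p_def w_def root_pairing_def Let_def)
qed

lemma yexp_vacuum_below: "m < root_pairing c \<beta> \<Longrightarrow> yexp c m (bv {#} \<beta>) = 0"
  using yexp_vacuum[of c m 1 \<beta>] by simp

lemma ymode_vacuum_vanish: "- root_pairing c \<beta> \<le> n \<Longrightarrow> ymode [] c n (bv {#} \<beta>) = 0"
  by (simp add: ymode_def yexp_vacuum_below)

lemma yexp_zero_root_vacuum:
  "yexp 0 k (sc s (bv {#} \<beta>)) = (if k = 0 then sc s (bv {#} \<beta>) else 0)"
proof -
  have "expcoef (Em 0) n (bv {#} \<beta>) = (if n = 0 then bv {#} \<beta> else 0)" for n
    by (rule expcoef_annihilated) (simp_all add: Em_zero_root)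
  then show ?thesis
    by (simp add: yexp_vacuum eps_def root_pairing_def)
qed

lemma yexp_0_right [simp]: "yexp c k 0 = 0"
  by (simp add: yexp_def)

lemma yfield_0_right [simp]: "yfield hs c k 0 = 0"
  by (induction hs arbitrary: k) simp_all

text \<open>On a vacuum vector the inner field is a single power \<open>z\<^sup>-\<^sup>k\<close>, \<open>k\<close> its number of
  Heisenberg factors, so the creation part \<open>h\<^sup>-(z)\<close>, a series in nonnegative powers of \<open>z\<close>,
  cannot reach \<open>z\<^sup>m\<close> for \<open>m < -k\<close>; of the annihilation part only \<open>h(0)\<close> acts.\<close>

lemma yfield_single_vacuum:
  assumes "m \<le> -1"
  shows "yfield [x] 0 m (sc s (bv {#} \<beta>)) =
     (if m = -1 then sc (s * ipc x (hv \<beta>)) (bv {#} \<beta>) else 0)"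
proof -
  have "(\<lambda>a. hminus x a (yfield [] 0 (m - a) (sc s (bv {#} \<beta>)))) = (\<lambda>_. 0)"
    using assms by (auto simp: fun_eq_iff yexp_zero_root_vacuum hminus_def)
  then have creation: "Sum_any (\<lambda>a. hminus x a (yfield [] 0 (m - a) (sc s (bv {#} \<beta>)))) = 0"
    by (simp only: Sum_any.neutral)
  have annihilation: "Sum_any (\<lambda>a. yfield [] 0 (m - a) (hplus x a (sc s (bv {#} \<beta>))))
     = yfield [] 0 (m + 1) (hplus x (-1) (sc s (bv {#} \<beta>)))"
    by (rule trans[OF Sum_any_eq_single[where z="-1"]])
       (simp_all add: hplus_vacuum yexp_zero_root_vacuum)
  show ?thesis
    using creation annihilation by (simp add: hplus_vacuum yexp_zero_root_vacuum)
qed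

lemma yfield_square_vacuum:
  assumes "m \<le> -2"
  shows "yfield [x, x] 0 m (sc s (bv {#} \<beta>)) =
     (if m = -2 then sc (s * ipc x (hv \<beta>) ^ 2) (bv {#} \<beta>) else 0)"
proof -
  have "(\<lambda>a. hminus x a (yfield [x] 0 (m - a) (sc s (bv {#} \<beta>)))) = (\<lambda>_. 0)"
    using assms
    by (auto simp del: yfield.simps simp add: fun_eq_iff yfield_single_vacuum hminus_def)
  then have creation: "Sum_any (\<lambda>a. hminus x a (yfield [x] 0 (m - a) (sc s (bv {#} \<beta>)))) = 0"
    by (simp only: Sum_any.neutral)
  have annihilation: "Sum_any (\<lambda>a. yfield [x] 0 (m - a) (hplus x a (sc s (bv {#} \<beta>))))
     = yfield [x] 0 (m + 1) (hplus x (-1) (sc s (bv {#} \<beta>)))"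
    by (rule trans[OF Sum_any_eq_single[where z="-1"]])
       (use assms in \<open>simp_all del: yfield.simps add: hplus_vacuum yfield_single_vacuum\<close>)
  have "yfield [x, x] 0 m (sc s (bv {#} \<beta>)) =
     yfield [x] 0 (m + 1) (hplus x (-1) (sc s (bv {#} \<beta>)))"
    using creation annihilation by simp
  then show ?thesis
    using assms
    by (simp del: yfield.simps add: hplus_vacuum yfield_single_vacuum power2_eq_square mult.assoc)
qed

lemma ymode_square_vacuum:
  "1 \<le> n \<Longrightarrow> ymode [x, x] 0 n (bv {#} \<beta>) =
     (if n = 1 then sc (ipc x (hv \<beta>) ^ 2) (bv {#} \<beta>) else 0)"
  using yfield_square_vacuum[of "-n-1" x 1 \<beta>] by (simp add: ymode_def del: yfield.simps)

lemma Lop_vacuum: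
  assumes "0 \<le> n"
    and "\<forall>g \<in> {gam1, gam2, gam3}. \<bar>root_pairing g \<beta>\<bar> \<le> 1"
  shows "Lop n (bv {#} \<beta>) =
    (if n = 0 then sc ((ipc x1 (hv \<beta>) ^ 2 + ipc x2 (hv \<beta>) ^ 2 + ipc x3 (hv \<beta>) ^ 2) / 10)
       (bv {#} \<beta>) else 0)"
proof -
  have pairing_neg: "root_pairing (- g) \<beta> = - root_pairing g \<beta>" for g
    by (simp add: root_pairing_def sum_negf)
  have "ymode [] g (n + 1) (bv {#} \<beta>) = 0" if "g \<in> {gam1, gam2, gam3}" for g
    using assms that by (intro ymode_vacuum_vanish) force
  moreover have "ymode [] (- g) (n + 1) (bv {#} \<beta>) = 0" if "g \<in> {gam1, gam2, gam3}" for g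
    using assms that by (intro ymode_vacuum_vanish) (force simp: pairing_neg)
  ultimately show ?thesis
    using assms(1) by (simp add: Lop_def ymode_square_vacuum sc_add_left add_divide_distrib)
qed

lemma bv_nonzero: "bv u \<beta> \<noteq> 0"
  by (metis bv_def zero_fun_def zero_neq_one)

lemma in_VL6_lam6: "in_VL6 (bv {#} (lam I6))"
proof -
  have "{k. bv {#} (lam I6) k \<noteq> 0} = {({#}, lam I6)}"
    by (auto simp: bv_def)
  moreover have "inQ 0"
    unfolding inQ_def by (rule exI[of _ 0]) simp
  ultimately show ?thesis
    by (auto simp: in_VL6_def bv_def split: if_splits)
qed

lemma Proj_lam6: "Proj (lam I6) = omega4"
  by (auto simp: fun_eq_iff Proj_def omega4_def lam_def tau_def split: idx.splits)

lemma root_pairing_lam6: "root_pairing c (lam I6) = c I6"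
  by (simp add: root_pairing_def lam_def UNIV_idx)

lemma raising_lam6: "ymode [] (aco i) 0 (bv {#} (lam I6)) = 0"
  by (rule ymode_vacuum_vanish) (simp add: root_pairing_lam6 aco_def)

lemma affine_raising_lam6: "ymode [] (- theta) 1 (bv {#} (lam I6)) = 0"
  by (rule ymode_vacuum_vanish) (simp add: root_pairing_lam6 theta_def aco_def)

lemma Lop_lam6:
  assumes "0 \<le> n"
  shows "Lop n (bv {#} (lam I6)) = (if n = 0 then sc (1/15) (bv {#} (lam I6)) else 0)"
proof -
  have pairings: "\<forall>g \<in> {gam1, gam2, gam3}. \<bar>root_pairing g (lam I6)\<bar> \<le> 1"
    by (simp add: root_pairing_lam6 gam1_def gam2_def gam3_def aco_def)
  have ipcs: "ipc x1 (hv (lam I6)) = 2/3" "ipc x2 (hv (lam I6)) = -1/3"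
      "ipc x3 (hv (lam I6)) = -1/3"
    by (simp_all add: ipc_def x1_def x2_def x3_def hv_def lam_def UNIV_idx ginv_def ginv_row_def
        pos_def of_rat_divide)
  show ?thesis
    using Lop_vacuum[OF assms pairings] unfolding ipcs by (simp add: power2_eq_square)
qed

theorem lemma6p17:
  shows "in_VL6 (bv {#} (lam I6)) \<and> is_hw (bv {#} (lam I6)) (1/15) omega4"
  using in_VL6_lam6 bv_nonzero affine_raising_lam6 raising_lam6 Lop_lam6 Proj_lam6
  by (auto simp: is_hw_def bv_def split: if_splits)

end
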